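(* The group $U_2$ is not linear, i.e. for no field $F$ and no integer $m\ge 1$ does $U_2$ embed as a subgroup of $\mathrm{GL}_m(F)$.
   Context: $K$ is a field of characteristic zero and $A_2=K\langle x,y\rangle$ is the free associative $K$-algebra with unity on $x,y$. $U_2=\{(x+f(y),\,y+b)\mid f(y)\in K\langle y\rangle,\ b\in K\}$ is the group of unitriangular automorphisms of $A_2$, where $(x+f(y),y+b)$ denotes the automorphism $x\mapsto x+f(y)$, $y\mapsto y+b$. *)

theory Defs
  imports "HOL-Analysis.Analysis" "HOL-Computational_Algebra.Polynomial"
begin

text \<open>The unitriangular automorphism (x + f(y), y + b) of the free algebra K<x,y>
  is encoded by the pair (f, b); note K<y> = K[y].  Composition of automorphisms
  (phi1 o phi2, i.e. apply phi2 first) gives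
  (x + f1(y), y + b1) o (x + f2(y), y + b2) = (x + f1(y) + f2(y + b1), y + b1 + b2).\<close>

type_synonym 'k u2 = "'k poly \<times> 'k"

definition u2_mult :: "'k::comm_ring_1 u2 \<Rightarrow> 'k u2 \<Rightarrow> 'k u2" where
  "u2_mult p q = (fst p + pcompose (fst q) [:snd p, 1:], snd p + snd q)"

definition GL_embedding :: "('k::comm_ring_1 u2 \<Rightarrow> 'f::field ^'n::finite^'n) \<Rightarrow> bool" where
  "GL_embedding h \<longleftrightarrow> inj h \<and> (\<forall>a. invertible (h a)) \<and>
     (\<forall>a b. h (u2_mult a b) = h a ** h b)"

end

theory Submission
  imports Defs "HOL-Algebra.Algebraic_Closure_Type"
begin

(*
  The automorphisms (x + f(y), y) form an abelian normal subgroup N of U_2, isomorphic to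
  (K[y], +), on which conjugation by t = (x, y + 1) acts as the shift f(y) -> f(y + 1).
  Extending scalars to the algebraic closure, it suffices to show that N acts trivially in
  every finite-dimensional representation rho of U_2 over an algebraically closed field.

  The N-fixed vectors form a U_2-invariant subspace V1. If V1 is proper, a common eigenvector
  of N modulo V1 has a character psi of (K[y], +); its images under the powers of t are
  eigenvectors modulo V1 with the shifted characters f -> psi(f(y + n)). By finite dimension
  two of these coincide, so psi is invariant under some shift by r <> 0, and since the
  difference operator f -> f(y + r) - f is onto K[y] in characteristic 0, psi = 1. Hence some
  v outside V1 has (rho f - 1) v in V1 for all f. For such v the map f -> (rho f - 1) v is
  additive and turns the difference operator Delta into B -> rho t B (rho t)^-1 - B. The
  matrices rho f - 1 are combinations of finitely many of them, all killed by Delta^K for K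
  beyond their degrees; as Delta^K is onto, (rho g - 1) v = 0 for every g, a contradiction.
*)

hide_const (open) Polynomials.degree Polynomials.lead_coeff Module.smult UnivPoly.coeff UnivPoly.monom
no_notation fps_nth (infixl \<open>$\<close> 75)

definition poly_translate :: "'a::comm_semiring_1 \<Rightarrow> 'a poly \<Rightarrow> 'a poly" where
  "poly_translate c p = p \<circ>\<^sub>p [:c, 1:]"

definition poly_difference :: "'a::comm_ring_1 \<Rightarrow> 'a poly \<Rightarrow> 'a poly" where
  "poly_difference r p = poly_translate r p - p"

lemma poly_translate_0 [simp]: "poly_translate 0 p = p"
  by (simp add: poly_translate_def)

lemma poly_translate_translate: "poly_translate a (poly_translate b p) = poly_translate (a + b) p"
  by (simp add: poly_translate_def pcompose_assoc[symmetric] pcompose_pCons algebra_simps)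

lemma poly_translate_add: "poly_translate c (p + q) = poly_translate c p + poly_translate c q"
  by (simp add: poly_translate_def pcompose_add)

lemma poly_difference_add: "poly_difference r (p + q) = poly_difference r p + poly_difference r q"
  by (simp add: poly_difference_def poly_translate_add)

lemma poly_difference_smult: "poly_difference r (smult c p) = smult c (poly_difference r p)"
  by (simp add: poly_difference_def poly_translate_def pcompose_smult smult_diff_right)

lemma poly_difference_const: "degree p = 0 \<Longrightarrow> poly_difference r p = 0"
  by (auto simp: poly_difference_def poly_translate_def elim: degree_eq_zeroE)

lemma degree_poly_difference_less:
  fixes p :: "'a::idom poly"
  assumes "degree p > 0"
  shows "degree (poly_difference r p) < degree p"
proof -
  have "degree (poly_translate r p) = degree p"
    by (simp add: poly_translate_def degree_pcompose)
  moreover have "lead_coeff (poly_translate r p) = lead_coeff p"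
    unfolding poly_translate_def by (subst lead_coeff_comp) simp_all
  ultimately have "coeff (poly_difference r p) (degree p) = 0"
    and "degree (poly_difference r p) \<le> degree p"
    by (simp_all add: poly_difference_def degree_diff_le)
  with assms show ?thesis
    by (metis le_neq_implies_less degree_0 leading_coeff_0_iff)
qed

lemma funpow_poly_difference_eq_0:
  fixes p :: "'a::idom poly"
  shows "degree p < k \<Longrightarrow> (poly_difference r ^^ k) p = 0"
proof (induction k arbitrary: p)
  case (Suc k)
  have zero: "(poly_difference r ^^ n) 0 = 0" for n
    by (induction n) (simp_all add: poly_difference_const)
  show ?case
  proof (cases "degree p = 0")
    case True
    then show ?thesis by (simp add: funpow_Suc_right poly_difference_const zero del: funpow.simps)
  next
    case False
    with Suc.prems have "degree (poly_difference r p) < k"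
      using degree_poly_difference_less[of p r] by linarith
    then show ?thesis by (simp add: funpow_Suc_right Suc.IH del: funpow.simps)
  qed
qed simp

lemma poly_difference_power_X:
  fixes r :: "'a::field_char_0"
  assumes "r \<noteq> 0"
  shows "degree (poly_difference r ([:0, 1:] ^ Suc n)) = n"
    and "lead_coeff (poly_difference r ([:0, 1:] ^ Suc n)) = of_nat (Suc n) * r"
proof -
  let ?d = "poly_difference r ([:0, 1:] ^ Suc n)"
  have "([:0, 1:] ^ k) \<circ>\<^sub>p [:r, 1:] = [:r, 1:] ^ k" for k
    by (induction k) (simp_all add: pcompose_mult pcompose_pCons pcompose_1)
  then have d: "?d = [:r, 1:] ^ Suc n - [:0, 1:] ^ Suc n"
    by (simp add: poly_difference_def poly_translate_def del: power_Suc)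
  have coeff_d: "coeff ?d k = (if k \<le> n then of_nat (Suc n choose k) * r ^ (Suc n - k) else 0)" for k
  proof (cases "k \<le> Suc n")
    case True
    then show ?thesis
      unfolding d by (auto simp: coeff_linear_poly_power simp del: power_Suc)
  next
    case False
    then show ?thesis
      unfolding d by (simp add: coeff_eq_0 degree_linear_power del: power_Suc)
  qed
  have "coeff ?d n \<noteq> 0"
    using assms of_nat_neq_0[of n, where ?'a = 'a] by (simp add: coeff_d del: power_Suc of_nat_Suc)
  moreover have "coeff ?d k = 0" if "k > n" for k
    using that by (simp add: coeff_d del: power_Suc)
  ultimately show "degree ?d = n"
    by (meson degree_le le_antisym le_degree not_le)
  then show "lead_coeff ?d = of_nat (Suc n) * r"
    by (simp add: coeff_d del: power_Suc)
qed

lemma poly_difference_surj: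
  fixes q :: "'a::field_char_0 poly"
  assumes "r \<noteq> 0"
  shows "\<exists>g. poly_difference r g = q"
proof (induction "degree q" arbitrary: q rule: less_induct)
  case less
  show ?case
  proof (cases "q = 0")
    case True
    then show ?thesis
      by (metis degree_0 poly_difference_const)
  next
    case False
    define n where "n = degree q"
    define c where "c = lead_coeff q / (of_nat (Suc n) * r)"
    define g where "g = smult c ([:0, 1:] ^ Suc n)"
    have "of_nat (Suc n) * r \<noteq> 0"
      using assms by (metis mult_eq_0_iff of_nat_neq_0)
    then have "c \<noteq> 0" "c * (of_nat (Suc n) * r) = lead_coeff q"
      using False by (simp_all add: c_def)
    moreover have "poly_difference r g = smult c (poly_difference r ([:0, 1:] ^ Suc n))"
      by (simp add: g_def poly_difference_smult del: power_Suc)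
    ultimately have "degree (poly_difference r g) = n" "lead_coeff (poly_difference r g) = lead_coeff q"
      using poly_difference_power_X[OF assms, of n] by (simp_all del: power_Suc)
    then have "q - poly_difference r g = 0 \<or> degree (q - poly_difference r g) < degree q"
      unfolding n_def
      by (metis degree_diff_le order.refl coeff_diff diff_self le_neq_implies_less leading_coeff_0_iff)
    then obtain g' where "poly_difference r g' = q - poly_difference r g"
      using less by (metis degree_0 poly_difference_const)
    then have "poly_difference r (g + g') = q"
      by (simp add: poly_difference_add)
    then show ?thesis ..
  qed
qed

lemma funpow_poly_difference_surj:
  fixes q :: "'a::field_char_0 poly"
  assumes "r \<noteq> 0"
  shows "\<exists>g. (poly_difference r ^^ k) g = q"
proof (induction k arbitrary: q)
  case (Suc k)
  obtain g where "poly_difference r g = q"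
    using poly_difference_surj[OF assms] by blast
  with Suc.IH[of g] show ?case
    by (metis comp_apply funpow.simps(2))
qed simp

lemma character_trivial_if_translation_invariant:
  fixes \<psi> :: "'a::field_char_0 poly \<Rightarrow> 'b::field"
  assumes add: "\<And>f g. \<psi> (f + g) = \<psi> f * \<psi> g" and zero: "\<psi> 0 = 1"
    and "r \<noteq> 0" and invariant: "\<And>f. \<psi> (poly_translate r f) = \<psi> f"
  shows "\<psi> f = 1"
proof -
  obtain g where "poly_difference r g = f"
    using poly_difference_surj[OF \<open>r \<noteq> 0\<close>] by blast
  then have "poly_translate r g = g + f"
    by (metis poly_difference_def diff_add_cancel add.commute)
  then have "\<psi> g * \<psi> f = \<psi> g"
    using add[of g f] invariant[of g] by simp
  moreover have "\<psi> g * \<psi> (- g) = 1"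
    using add[of g "- g"] zero by simp
  ultimately show ?thesis
    by (metis mult_cancel_left1 zero_neq_one)
qed

lemma exists_nontrivial_linear_relation:
  fixes v :: "nat \<Rightarrow> 'a::field^'n"
  obtains c where "\<exists>i\<le>CARD('n). c i \<noteq> 0" "(\<Sum>i\<le>CARD('n). c i *s v i) = 0"
proof (cases "inj_on v {..CARD('n)}")
  case True
  have "vec.dependent (v ` {..CARD('n)})"
  proof (rule vec.dependent_biggerset_general)
    show "card (v ` {..CARD('n)}) > vec.dim (v ` {..CARD('n)})"
      using True dim_subset_UNIV_cart_gen[of "v ` {..CARD('n)}"] by (simp add: card_image)
  qed
  then obtain u where u: "\<exists>w\<in>v ` {..CARD('n)}. u w \<noteq> 0" "(\<Sum>w\<in>v ` {..CARD('n)}. u w *s w) = 0"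
    by (auto simp: vec.dependent_finite)
  show ?thesis
  proof (rule that[of "u \<circ> v"])
    show "\<exists>i\<le>CARD('n). (u \<circ> v) i \<noteq> 0"
      using u(1) by auto
    show "(\<Sum>i\<le>CARD('n). (u \<circ> v) i *s v i) = 0"
      using u(2) by (simp add: sum.reindex[OF True])
  qed
next
  case False
  then obtain i j where ij: "i \<le> CARD('n)" "j \<le> CARD('n)" "i \<noteq> j" "v i = v j"
    by (auto simp: inj_on_def)
  define c where "c k = (if k = i then 1 else if k = j then -1 else 0 :: 'a)" for k :: nat
  have "(\<Sum>k\<le>CARD('n). c k *s v k) = (\<Sum>k\<in>{i, j}. c k *s v k)"
    by (rule sum.mono_neutral_right) (use ij in \<open>auto simp: c_def\<close>)
  also have "\<dots> = 0"
    using ij by (simp add: c_def)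
  finally show ?thesis
    using ij by (intro that[of c]) (auto simp: c_def)
qed

definition poly_apply :: "'a::field poly \<Rightarrow> 'a^'n^'n \<Rightarrow> 'a^'n \<Rightarrow> 'a^'n" where
  "poly_apply p A v = foldr (\<lambda>a w. a *s v + A *v w) (coeffs p) 0"

lemma poly_apply_0 [simp]: "poly_apply 0 A v = 0"
  by (simp add: poly_apply_def)

lemma poly_apply_pCons [simp]: "poly_apply (pCons a p) A v = a *s v + A *v poly_apply p A v"
  by (cases "p = 0 \<and> a = 0") (auto simp: poly_apply_def cCons_def)

lemma poly_apply_add: "poly_apply (p + q) A v = poly_apply p A v + poly_apply q A v"
proof (induction p arbitrary: q rule: pCons_induct)
  case (pCons a p)
  then show ?case
    by (cases q rule: pCons_cases) (simp add: algebra_simps)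
qed simp

lemma poly_apply_smult: "poly_apply (smult c p) A v = c *s poly_apply p A v"
  by (induction p rule: pCons_induct) (auto simp: vector_scalar_commute)

lemma poly_apply_mult: "poly_apply (p * q) A v = poly_apply p A (poly_apply q A v)"
  by (induction p rule: pCons_induct) (simp_all add: poly_apply_add poly_apply_smult)

lemma poly_apply_monom: "poly_apply (monom c i) A v = c *s ((*v) A ^^ i) v"
  by (induction i arbitrary: c) (simp_all add: monom_0 monom_Suc vector_scalar_commute)

lemma poly_apply_sum: "poly_apply (sum f I) A v = (\<Sum>i\<in>I. poly_apply (f i) A v)"
  by (induction I rule: infinite_finite_induct) (simp_all add: poly_apply_add)

lemma poly_apply_in_subspace:
  assumes "vec.subspace E" "\<And>u. u \<in> E \<Longrightarrow> A *v u \<in> E" "v \<in> E"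
  shows "poly_apply p A v \<in> E"
  by (induction p rule: pCons_induct)
    (auto intro!: vec.subspace_add vec.subspace_scale vec.subspace_0 assms)

lemma exists_annihilating_poly:
  fixes A :: "'a::field^'n^'n"
  obtains q where "q \<noteq> 0" "poly_apply q A v = 0"
proof -
  obtain c where c: "\<exists>i\<le>CARD('n). c i \<noteq> 0" "(\<Sum>i\<le>CARD('n). c i *s ((*v) A ^^ i) v) = 0"
    by (rule exists_nontrivial_linear_relation)
  define q where "q = (\<Sum>i\<le>CARD('n). monom (c i) i)"
  have "poly_apply q A v = 0"
    using c(2) by (simp add: q_def poly_apply_sum poly_apply_monom)
  moreover have "q \<noteq> 0"
  proof -
    obtain i where "i \<le> CARD('n)" "c i \<noteq> 0"
      using c(1) by blast
    then have "coeff q i \<noteq> 0"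
      by (simp add: q_def coeff_sum)
    then show ?thesis
      by auto
  qed
  ultimately show ?thesis
    using that by blast
qed

lemma subspace_scale_iff:
  fixes x :: "'a::field^'n"
  assumes "vec.subspace S" "c \<noteq> 0"
  shows "c *s x \<in> S \<longleftrightarrow> x \<in> S"
  using vec.subspace_scale[OF assms(1), of "c *s x" "inverse c"] vec.subspace_scale[OF assms(1)] assms(2)
  by auto

lemma exists_eigenvector_mod:
  fixes A :: "'a::alg_closed_field^'n^'n"
  assumes E: "vec.subspace E" and invE: "\<And>u. u \<in> E \<Longrightarrow> A *v u \<in> E"
    and S: "vec.subspace S" and v: "v \<in> E" "v \<notin> S"
  obtains l w where "w \<in> E" "w \<notin> S" "A *v w - l *s w \<in> S"
proof -
  define P where "P q \<longleftrightarrow> q \<noteq> 0 \<and> poly_apply q A v \<in> S" for q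
  obtain q0 where "q0 \<noteq> 0" "poly_apply q0 A v = 0"
    by (rule exists_annihilating_poly)
  then have "P q0"
    using vec.subspace_0[OF S] by (simp add: P_def)
  then obtain q where q: "P q" and q_min: "\<And>q'. P q' \<Longrightarrow> degree q \<le> degree q'"
    using ex_has_least_nat[of P q0 degree] by blast
  have "degree q \<noteq> 0"
  proof
    assume "degree q = 0"
    then obtain c where "q = [:c:]" "c \<noteq> 0"
      using q by (auto simp: P_def elim: degree_eq_zeroE)
    then show False
      using q v(2) subspace_scale_iff[OF S] by (simp add: P_def)
  qed
  then obtain l where "poly q l = 0"
    using alg_closed_imp_poly_has_root by blast
  then obtain r where qr: "q = [:-l, 1:] * r"
    by (auto simp: poly_eq_0_iff_dvd)
  have "r \<noteq> 0"
    using q qr by (auto simp: P_def)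
  then have "degree q = Suc (degree r)"
    unfolding qr by (subst degree_mult_eq) simp_all
  then have "\<not> P r"
    using q_min[of r] by auto
  then have "poly_apply r A v \<notin> S"
    using \<open>r \<noteq> 0\<close> by (simp add: P_def)
  moreover have "poly_apply r A v \<in> E"
    by (rule poly_apply_in_subspace[OF E invE v(1)])
  moreover have "A *v poly_apply r A v - l *s poly_apply r A v = poly_apply q A v"
    unfolding qr poly_apply_mult by (simp add: vec_eq_iff)
  then have "A *v poly_apply r A v - l *s poly_apply r A v \<in> S"
    using q by (simp add: P_def)
  ultimately show ?thesis
    using that by blast
qed

lemma mat_vector_mult: "mat c *v x = c *s (x :: 'a::semiring_1^'n)"
  by (simp add: vec_eq_iff matrix_vector_mult_def mat_def if_distrib[of "\<lambda>a. a * _"] cong: if_cong)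

lemma subspace_eigenspace_mod:
  fixes A :: "'a::field^'n^'n"
  assumes "vec.subspace E" "vec.subspace S"
  shows "vec.subspace {u \<in> E. A *v u - l *s u \<in> S}"
proof -
  have "{u \<in> E. A *v u - l *s u \<in> S} = E \<inter> {u. (A - mat l) *v u \<in> S}"
    by (auto simp: matrix_vector_mult_diff_rdistrib mat_vector_mult)
  then show ?thesis
    using assms by (simp add: vec.subspace_inter vec.subspace_linear_preimage)
qed

lemma exists_common_eigenvector_mod:
  fixes M :: "'b \<Rightarrow> 'a::alg_closed_field^'n^'n"
  assumes comm: "\<And>a b. M a ** M b = M b ** M a"
    and S: "vec.subspace S" "S \<noteq> UNIV" and invS: "\<And>a u. u \<in> S \<Longrightarrow> M a *v u \<in> S"
  obtains v eig where "v \<notin> S" "\<And>a. M a *v v - eig a *s v \<in> S"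
proof -
  define Q where "Q E \<longleftrightarrow> vec.subspace E \<and> S \<subset> E \<and> (\<forall>a. \<forall>u\<in>E. M a *v u \<in> E)" for E
  have "Q UNIV"
    using S by (auto simp: Q_def)
  then obtain E where QE: "Q E" and E_min: "\<And>E'. Q E' \<Longrightarrow> vec.dim E \<le> vec.dim E'"
    using ex_has_least_nat[of Q UNIV vec.dim] by blast
  then have E: "vec.subspace E" "S \<subset> E" and invE: "\<And>a u. u \<in> E \<Longrightarrow> M a *v u \<in> E"
    by (auto simp: Q_def)
  then obtain w0 where w0: "w0 \<in> E" "w0 \<notin> S"
    by blast
  \<comment> \<open>The quotient E/S is irreducible, so each M a acts on it as a scalar.\<close>
  have "\<exists>l. \<forall>u\<in>E. M a *v u - l *s u \<in> S" for a
  proof -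
    obtain l w where lw: "w \<in> E" "w \<notin> S" "M a *v w - l *s w \<in> S"
      using exists_eigenvector_mod[OF E(1) invE S(1) w0] by blast
    define E' where "E' = {u \<in> E. M a *v u - l *s u \<in> S}"
    have "M a *v (M b *v u) - l *s (M b *v u) = M b *v (M a *v u - l *s u)" for b u
      by (simp add: matrix_vector_mul_assoc comm matrix_vector_mult_diff_distrib vector_scalar_commute)
    then have "Q E'"
      using subspace_eigenspace_mod[OF E(1) S(1)] E(2) lw invE invS
        vec.subspace_scale[OF S(1)] vec.subspace_diff[OF S(1)]
      by (auto simp: Q_def E'_def)
    then have "E' = E"
      using E_min vec.subspace_dim_equal[OF subspace_eigenspace_mod[OF E(1) S(1)] E(1)]
      by (auto simp: E'_def)
    then show ?thesis
      by (auto simp: E'_def)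
  qed
  then have "\<forall>a. \<exists>l. M a *v w0 - l *s w0 \<in> S"
    using w0(1) by blast
  then show ?thesis
    using that w0(2) by metis
qed

lemma eigenvectors_mod_independent:
  fixes M :: "'b \<Rightarrow> 'a::field^'n^'n"
  assumes S: "vec.subspace S" and invS: "\<And>a u. u \<in> S \<Longrightarrow> M a *v u \<in> S"
    and v: "\<And>i. i \<in> I \<Longrightarrow> v i \<notin> S"
    and eig: "\<And>i a. i \<in> I \<Longrightarrow> M a *v v i - eig i a *s v i \<in> S"
    and inj: "inj_on eig I" and I: "finite I"
    and rel: "(\<Sum>i\<in>I. c i *s v i) \<in> S"
  shows "\<forall>i\<in>I. c i = 0"
proof -
  have "J \<subseteq> I \<Longrightarrow> (\<Sum>i\<in>J. c i *s v i) \<in> S \<Longrightarrow> \<forall>i\<in>J. c i = 0" for J c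
  proof (induction J arbitrary: c rule: infinite_finite_induct)
    case (infinite J)
    then show ?case
      using I finite_subset by blast
  next
    case (insert j J)
    define x where "x = (\<Sum>i\<in>insert j J. c i *s v i)"
    have "c i = 0" if "i \<in> J" for i
    proof -
      have "c i * (eig i a - eig j a) = 0" for a
      proof -
        \<comment> \<open>Applying M a - eig j a modulo S kills the j-th term and rescales the others.\<close>
        define c' where "c' i = c i * (eig i a - eig j a)" for i
        have "(\<Sum>i\<in>J. c' i *s v i) = (\<Sum>i\<in>insert j J. c' i *s v i)"
          using insert.hyps by (simp add: c'_def)
        also have "\<dots> = (M a *v x - eig j a *s x) - (\<Sum>i\<in>insert j J. c i *s (M a *v v i - eig i a *s v i))"
          by (simp add: x_def c'_def vec.sum vec.scale_sum_right sum_subtractf[symmetric]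
              vector_scalar_commute algebra_simps)
        also have "\<dots> \<in> S"
        proof (rule vec.subspace_diff[OF S])
          show "M a *v x - eig j a *s x \<in> S"
            using insert.prems(2) by (simp add: x_def vec.subspace_diff[OF S] vec.subspace_scale[OF S] invS)
          show "(\<Sum>i\<in>insert j J. c i *s (M a *v v i - eig i a *s v i)) \<in> S"
            using insert.prems(1) by (intro vec.subspace_sum[OF S] vec.subspace_scale[OF S] eig) auto
        qed
        finally show ?thesis
          using insert.IH[of c'] insert.prems(1) that by (simp add: c'_def)
      qed
      moreover have "eig i \<noteq> eig j"
        using inj insert that by (auto dest: inj_onD)
      ultimately show ?thesis
        by (metis eq_iff_diff_eq_0 ext mult_eq_0_iff)
    qed
    moreover have "c j *s v j \<in> S"
      using insert.prems(2) calculation insert.hyps by simp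
    then have "c j = 0"
      using v insert.prems(1) subspace_scale_iff[OF S] by (metis insertI1 subsetD)
    ultimately show ?case
      by blast
  qed simp
  then show ?thesis
    using rel by blast
qed

lemma eigenvectors_mod_repeat_eigenvalue:
  fixes M :: "'b \<Rightarrow> 'a::field^'n^'n" and v :: "nat \<Rightarrow> 'a^'n"
  assumes S: "vec.subspace S" and invS: "\<And>a u. u \<in> S \<Longrightarrow> M a *v u \<in> S"
    and v: "\<And>i. v i \<notin> S" and eig: "\<And>i a. M a *v v i - eig i a *s v i \<in> S"
  obtains i j where "i < j" "eig i = eig j"
proof -
  obtain c where c: "\<exists>i\<le>CARD('n). c i \<noteq> 0" "(\<Sum>i\<le>CARD('n). c i *s v i) = 0"
    by (rule exists_nontrivial_linear_relation)
  have "\<not> inj_on eig {..CARD('n)}"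
  proof
    assume "inj_on eig {..CARD('n)}"
    then have "\<forall>i\<in>{..CARD('n)}. c i = 0"
      by (intro eigenvectors_mod_independent[where M = M and v = v, OF S invS])
        (auto simp: v eig c(2) vec.subspace_0[OF S])
    with c(1) show False
      by auto
  qed
  then obtain i j where "i \<noteq> j" "eig i = eig j"
    by (auto simp: inj_on_def)
  then show ?thesis
    using that by (metis linorder_neqE_nat)
qed

lemma eigenvalue_mod_unique:
  fixes A :: "'a::field^'n^'n"
  assumes S: "vec.subspace S" and "e \<notin> S" "A *v e - l *s e \<in> S" "A *v e - l' *s e \<in> S"
  shows "l = l'"
proof -
  have "(l' - l) *s e = (A *v e - l *s e) - (A *v e - l' *s e)"
    by (simp add: algebra_simps)
  also have "\<dots> \<in> S"
    using assms(3,4) by (rule vec.subspace_diff[OF S])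
  finally have "(l' - l) *s e \<in> S" .
  then show ?thesis
    using assms(2) subspace_scale_iff[OF S, of "l' - l" e] by auto
qed

lemma matrix_family_finite_spanning_subfamily:
  fixes M :: "'b \<Rightarrow> 'a::field^'n^'m"
  obtains P where "finite P" and "\<And>x. \<exists>c. M x = (\<Sum>p\<in>P. map_matrix ((*) (c p)) (M p))"
proof -
  \<comment> \<open>Flatten matrices to vectors, where finite dimensionality is available.\<close>
  define flat :: "'a^'n^'m \<Rightarrow> 'a^('m \<times> 'n)" where "flat A = (\<chi> p. A $ fst p $ snd p)" for A
  obtain B where B: "B \<subseteq> range (flat \<circ> M)" "vec.independent B" "range (flat \<circ> M) \<subseteq> vec.span B"
    using vec.maximal_independent_subset by blast
  then obtain P where P: "inj_on (flat \<circ> M) P" "B = (flat \<circ> M) ` P"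
    by (meson subset_image_inj)
  have "finite P"
    using B(2) P finite_image_iff vec.finiteI_independent by blast
  moreover have "\<exists>c. M x = (\<Sum>p\<in>P. map_matrix ((*) (c p)) (M p))" for x
  proof -
    have "flat (M x) \<in> vec.span ((flat \<circ> M) ` P)"
      using B(3) P(2) by auto
    then obtain u where "flat (M x) = (\<Sum>y\<in>(flat \<circ> M) ` P. u y *s y)"
      using \<open>finite P\<close> by (auto simp: vec.span_finite)
    then have "flat (M x) = (\<Sum>p\<in>P. u (flat (M p)) *s flat (M p))"
      using sum.reindex[OF P(1), of "\<lambda>y. u y *s y"] by (simp add: o_def)
    then have "M x = (\<Sum>p\<in>P. map_matrix ((*) (u (flat (M p)))) (M p))"
      by (simp add: vec_eq_iff flat_def)
    then show ?thesis
      by (rule exI[of _ "\<lambda>p. u (flat (M p))"])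
  qed
  ultimately show ?thesis
    using that by blast
qed

lemma additive_map_matrix_scale_sum:
  fixes G :: "'a::comm_ring_1^'n^'m \<Rightarrow> 'a^'k"
  assumes add: "\<And>A B. G (A + B) = G A + G B" and scale: "\<And>c A. G (map_matrix ((*) c) A) = c *s G A"
  shows "G (\<Sum>p\<in>P. map_matrix ((*) (c p)) (A p)) = (\<Sum>p\<in>P. c p *s G (A p))"
proof -
  have "G 0 = 0"
    using add[of 0 0] by simp
  then show ?thesis
    by (induction P rule: infinite_finite_induct) (simp_all add: add scale)
qed

lemma matrix_add_rdistrib: "(A + B) ** C = A ** C + B ** (C :: 'a::semiring_1^_^_)"
  by (simp add: matrix_matrix_mult_def vec_eq_iff sum.distrib distrib_right)

lemma matrix_mult_scale_left: "map_matrix ((*) c) A ** B = map_matrix ((*) c) (A ** B :: 'a::comm_semiring_1^_^_)"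
  by (simp add: matrix_matrix_mult_def vec_eq_iff sum_distrib_left mult.assoc)

lemma matrix_mult_scale_right: "A ** map_matrix ((*) c) B = map_matrix ((*) c) (A ** B :: 'a::comm_semiring_1^_^_)"
  by (simp add: matrix_matrix_mult_def vec_eq_iff sum_distrib_left mult.left_commute)

lemma matrix_vector_mult_scale: "map_matrix ((*) c) A *v v = c *s (A *v v :: 'a::comm_semiring_1^_)"
  by (simp add: matrix_vector_mult_def vec_eq_iff sum_distrib_left mult.assoc)

locale u2_representation =
  fixes \<rho> :: "'k::field_char_0 u2 \<Rightarrow> 'a::field^'n^'n"
  assumes mult: "\<And>p q. \<rho> (u2_mult p q) = \<rho> p ** \<rho> q"
    and one: "\<rho> (0, 0) = mat 1"
begin

definition N :: "'k poly \<Rightarrow> 'a^'n^'n" where "N f = \<rho> (f, 0)"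

definition T :: "'k \<Rightarrow> 'a^'n^'n" where "T b = \<rho> (0, b)"

lemma N_add: "N (f + g) = N f ** N g"
  by (simp add: N_def flip: mult) (simp add: u2_mult_def)

lemma N_0: "N 0 = mat 1"
  by (simp add: N_def one)

lemma N_commute: "N f ** N g = N g ** N f"
  by (metis N_add add.commute)

lemma T_add: "T (b + c) = T b ** T c"
  by (simp add: T_def flip: mult) (simp add: u2_mult_def)

lemma T_inverse: "T b ** T (- b) = mat 1"
  by (metis T_add T_def add.right_inverse one)

lemma T_N: "T b ** N f = N (poly_translate b f) ** T b"
  by (simp add: N_def T_def flip: mult) (simp add: u2_mult_def poly_translate_def)

lemma N_T: "N f ** T b = T b ** N (poly_translate (- b) f)"
  using T_N[of b "poly_translate (- b) f"] by (simp add: poly_translate_translate)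

lemma N_conj: "T b ** N f ** T (- b) = N (poly_translate b f)"
  by (simp add: T_N flip: matrix_mul_assoc) (simp add: matrix_mul_assoc T_inverse)

definition Fix :: "('a^'n) set" where "Fix = {v. \<forall>f. N f *v v = v}"

definition Fix2 :: "('a^'n) set" where "Fix2 = {v. \<forall>f. N f *v v - v \<in> Fix}"

lemma subspace_Fix: "vec.subspace Fix"
  by (simp add: vec.subspace_def Fix_def matrix_vector_right_distrib vector_scalar_commute)

lemma T_Fix: "v \<in> Fix \<Longrightarrow> T b *v v \<in> Fix"
  by (simp add: Fix_def matrix_vector_mul_assoc N_T) (simp flip: matrix_vector_mul_assoc)

lemma T_Fix2: "v \<in> Fix2 \<Longrightarrow> T b *v v \<in> Fix2"
proof -
  assume v: "v \<in> Fix2"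
  have "N f *v (T b *v v) - T b *v v = T b *v (N (poly_translate (- b) f) *v v - v)" for f
    by (simp add: matrix_vector_mul_assoc N_T matrix_vector_mult_diff_distrib)
  then show ?thesis
    using v T_Fix by (simp add: Fix2_def)
qed

lemma Fix2_add:
  assumes "v \<in> Fix2"
  shows "(N (f + g) - mat 1) *v v = (N f - mat 1) *v v + (N g - mat 1) *v v"
proof -
  have "N f *v (N g *v v - v) = N g *v v - v"
    using assms by (simp add: Fix2_def Fix_def)
  then have "N f *v (N g *v v) = N f *v v + (N g *v v - v)"
    by (metis add_diff_cancel_left' diff_add_cancel matrix_vector_right_distrib)
  then show ?thesis
    by (simp add: N_add matrix_vector_mult_diff_rdistrib flip: matrix_vector_mul_assoc)
qed

definition conj_diff :: "'a^'n^'n \<Rightarrow> 'a^'n^'n" where "conj_diff B = T 1 ** B ** T (- 1) - B"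

lemma conj_diff_vec: "conj_diff B *v v = T 1 *v (B *v (T (- 1) *v v)) - B *v v"
  by (simp add: conj_diff_def matrix_vector_mult_diff_rdistrib matrix_vector_mul_assoc matrix_mul_assoc)

lemma conj_diff_add: "conj_diff (A + B) = conj_diff A + conj_diff B"
  by (simp add: conj_diff_def matrix_add_ldistrib matrix_add_rdistrib)

lemma conj_diff_scale: "conj_diff (map_matrix ((*) c) A) = map_matrix ((*) c) (conj_diff A)"
  by (simp add: conj_diff_def matrix_mult_scale_left matrix_mult_scale_right vec_eq_iff right_diff_distrib)

lemma N_poly_difference:
  assumes "v \<in> Fix2"
  shows "(N (poly_difference 1 f) - mat 1) *v v = conj_diff (N f - mat 1) *v v"
proof -
  have "(N (- f) - mat 1) *v v = - ((N f - mat 1) *v v)"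
    using Fix2_add[OF assms, of f "- f"] by (simp add: N_0 add.commute eq_neg_iff_add_eq_0)
  moreover have "T 1 *v ((N f - mat 1) *v (T (- 1) *v v)) = (N (poly_translate 1 f) - mat 1) *v v"
    by (simp only: matrix_vector_mult_diff_rdistrib matrix_vector_mult_diff_distrib matrix_vector_mul_lid)
      (simp add: matrix_vector_mul_assoc matrix_mul_assoc T_inverse N_conj matrix_vector_mult_diff_rdistrib)
  ultimately show ?thesis
    using Fix2_add[OF assms, of "poly_translate 1 f" "- f"]
    by (simp add: poly_difference_def conj_diff_vec)
qed

lemma funpow_N_poly_difference:
  "v \<in> Fix2 \<Longrightarrow> (N ((poly_difference 1 ^^ k) f) - mat 1) *v v = (conj_diff ^^ k) (N f - mat 1) *v v"
proof (induction k arbitrary: v)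
  case (Suc k)
  then show ?case
    using Suc.IH[OF T_Fix2[OF Suc.prems]] by (simp add: N_poly_difference conj_diff_vec)
qed simp

lemma funpow_conj_diff_add: "(conj_diff ^^ k) (A + B) = (conj_diff ^^ k) A + (conj_diff ^^ k) B"
  by (induction k) (simp_all add: conj_diff_add)

lemma funpow_conj_diff_scale:
  "(conj_diff ^^ k) (map_matrix ((*) c) A) = map_matrix ((*) c) ((conj_diff ^^ k) A)"
  by (induction k) (simp_all add: conj_diff_scale)

lemma Fix2_subset_Fix: "Fix2 \<subseteq> Fix"
proof
  fix v assume v: "v \<in> Fix2"
  obtain P where "finite P"
    and P: "\<And>f. \<exists>c. N f - mat 1 = (\<Sum>p\<in>P. map_matrix ((*) (c p)) (N p - mat 1))"
    by (fact matrix_family_finite_spanning_subfamily[where M = "\<lambda>f. N f - mat 1"])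
  define K where "K = Suc (Max (degree ` P))"
  have "(conj_diff ^^ K) (N p - mat 1) *v v = 0" if "p \<in> P" for p
  proof -
    have "degree p < K"
      using \<open>finite P\<close> that by (simp add: K_def le_imp_less_Suc)
    then show ?thesis
      using funpow_N_poly_difference[OF v, of K p] by (simp add: funpow_poly_difference_eq_0 N_0)
  qed
  moreover have "(conj_diff ^^ K) (\<Sum>p\<in>P. map_matrix ((*) (c p)) (N p - mat 1)) *v v =
      (\<Sum>p\<in>P. c p *s ((conj_diff ^^ K) (N p - mat 1) *v v))" for c
    by (rule additive_map_matrix_scale_sum)
      (simp_all add: funpow_conj_diff_add funpow_conj_diff_scale matrix_vector_mult_add_rdistrib
        matrix_vector_mult_scale)
  ultimately have vanish: "(conj_diff ^^ K) (N f - mat 1) *v v = 0" for f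
    using P[of f] by auto
  have "N g *v v = v" for g
  proof -
    obtain f where "(poly_difference 1 ^^ K) f = g"
      using funpow_poly_difference_surj[of 1 K g] by auto
    then have "(N g - mat 1) *v v = 0"
      using funpow_N_poly_difference[OF v, of K f] vanish[of f] by simp
    then show ?thesis
      by (simp add: matrix_vector_mult_diff_rdistrib)
  qed
  then show "v \<in> Fix"
    by (simp add: Fix_def)
qed

end

locale alg_closed_u2_representation = u2_representation \<rho>
  for \<rho> :: "'k::field_char_0 u2 \<Rightarrow> 'a::alg_closed_field^'n^'n"
begin

lemma exists_fixed_vector_mod:
  assumes S: "vec.subspace S" "S \<noteq> UNIV"
    and invN: "\<And>f u. u \<in> S \<Longrightarrow> N f *v u \<in> S" and invT: "\<And>b u. u \<in> S \<Longrightarrow> T b *v u \<in> S"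
  obtains v where "v \<notin> S" "\<And>f. N f *v v - v \<in> S"
proof -
  obtain e \<psi> where e: "e \<notin> S" and eig: "\<And>f. N f *v e - \<psi> f *s e \<in> S"
  proof (rule exists_common_eigenvector_mod[where M = N, OF N_commute S invN])
    fix v eig assume "v \<notin> S" "\<And>a. N a *v v - eig a *s v \<in> S"
    then show thesis
      by (rule that)
  qed
  have \<psi>_add: "\<psi> (f + g) = \<psi> f * \<psi> g" for f g
  proof (rule eigenvalue_mod_unique[OF S(1) e eig])
    have "N (f + g) *v e - (\<psi> f * \<psi> g) *s e =
        N f *v (N g *v e - \<psi> g *s e) + \<psi> g *s (N f *v e - \<psi> f *s e)"
      by (simp add: N_add matrix_vector_mult_diff_distrib vector_scalar_commute mult.commute
          flip: matrix_vector_mul_assoc)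
    also have "\<dots> \<in> S"
      by (intro vec.subspace_add[OF S(1)] vec.subspace_scale[OF S(1)] invN eig)
    finally show "N (f + g) *v e - (\<psi> f * \<psi> g) *s e \<in> S" .
  qed
  have \<psi>_0: "\<psi> 0 = 1"
    by (rule eigenvalue_mod_unique[OF S(1) e eig]) (simp add: N_0 vec.subspace_0[OF S(1)])
  define w where "w n = T (- of_nat n) *v e" for n :: nat
  have w: "w n \<notin> S" for n
  proof
    assume "w n \<in> S"
    then have "T (of_nat n) *v w n \<in> S"
      by (rule invT)
    with e show False
      by (simp add: w_def matrix_vector_mul_assoc T_inverse)
  qed
  have w_eig: "N f *v w n - \<psi> (poly_translate (of_nat n) f) *s w n \<in> S" for n f
  proof -
    have "N f *v w n = T (- of_nat n) *v (N (poly_translate (of_nat n) f) *v e)"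
      by (simp add: w_def matrix_vector_mul_assoc N_T)
    then have "N f *v w n - \<psi> (poly_translate (of_nat n) f) *s w n =
        T (- of_nat n) *v (N (poly_translate (of_nat n) f) *v e - \<psi> (poly_translate (of_nat n) f) *s e)"
      by (simp add: w_def matrix_vector_mult_diff_distrib vector_scalar_commute)
    then show ?thesis
      by (simp add: invT eig)
  qed
  obtain i j where "i < j"
    and ij: "(\<lambda>f. \<psi> (poly_translate (of_nat i) f)) = (\<lambda>f. \<psi> (poly_translate (of_nat j) f))"
    by (rule eigenvectors_mod_repeat_eigenvalue[where M = N and v = w, OF S(1) invN w w_eig])
  have "\<psi> (poly_translate (of_nat j - of_nat i) f) = \<psi> f" for f
    using fun_cong[OF ij, of "poly_translate (- of_nat i) f"] by (simp add: poly_translate_translate)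
  moreover have "of_nat j - of_nat i \<noteq> (0 :: 'k)"
    using \<open>i < j\<close> by simp
  ultimately have "\<psi> f = 1" for f
    using character_trivial_if_translation_invariant[OF \<psi>_add \<psi>_0] by blast
  then show ?thesis
    using that e eig by simp
qed

lemma Fix_eq_UNIV: "Fix = UNIV"
proof (rule ccontr)
  assume "Fix \<noteq> UNIV"
  moreover have "u \<in> Fix \<Longrightarrow> N f *v u \<in> Fix" for f u
    by (simp add: Fix_def)
  ultimately obtain v where "v \<notin> Fix" "\<And>f. N f *v v - v \<in> Fix"
    using exists_fixed_vector_mod[OF subspace_Fix] T_Fix by blast
  with Fix2_subset_Fix show False
    by (auto simp: Fix2_def)
qed

lemma N_eq_mat_1: "N f = mat 1"
  using Fix_eq_UNIV by (simp add: matrix_eq Fix_def set_eq_iff)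

end

lemma invertible_idempotent_eq_mat_1:
  fixes A :: "'a::comm_ring_1^'n^'n"
  assumes "invertible A" "A ** A = A"
  shows "A = mat 1"
proof -
  obtain B where "A ** B = mat 1"
    using assms(1) by (auto simp: invertible_def)
  then have "A = (A ** A) ** B"
    by (simp flip: matrix_mul_assoc)
  with assms(2) \<open>A ** B = mat 1\<close> show ?thesis
    by simp
qed

lemma map_matrix_to_ac_mult: "map_matrix to_ac (A ** B) = map_matrix to_ac A ** map_matrix to_ac B"
  by (simp add: matrix_matrix_mult_def vec_eq_iff to_ac_sum)

theorem corollary1:
  fixes h :: "'k::field_char_0 u2 \<Rightarrow> 'f::field ^'n::finite^'n"
  shows "\<not> GL_embedding h"
proof
  assume "GL_embedding h"
  then have inj: "inj h" and inv: "\<And>a. invertible (h a)"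
    and mult: "\<And>a b. h (u2_mult a b) = h a ** h b"
    by (auto simp: GL_embedding_def)
  have "h (0, 0) = mat 1"
    using inv mult[of "(0, 0)" "(0, 0)"] by (intro invertible_idempotent_eq_mat_1) (simp_all add: u2_mult_def)
  then interpret alg_closed_u2_representation "\<lambda>a. map_matrix to_ac (h a)"
    by unfold_locales (simp_all add: mult map_matrix_to_ac_mult mat_def vec_eq_iff)
  have "map_matrix to_ac (h (1, 0)) = map_matrix to_ac (h (0, 0))"
    using N_eq_mat_1[of 1] N_eq_mat_1[of 0] by (simp add: N_def)
  then have "h (1, 0) = h (0, 0)"
    by (simp add: vec_eq_iff)
  with inj show False
    by (auto dest: injD)
qed

end
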